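(* Let $f:S^1\to S^1$ be a Denjoy homeomorphism as described in the context, $\Delta$ the partition of $S^1$ into $f$-orbits, $Y=S^1/\Delta$ with the quotient topology, and $p:S^1\to Y$ the projection. Then $p$ has property (CONT) but does not have property (COMP).
   Context: A Denjoy homeomorphism here is an orientation preserving homeomorphism $f:S^1\to S^1$ with irrational rotation number such that (i) there is a nowhere dense Cantor set $\Gamma\subset S^1$ with $f(\Gamma)=\Gamma$ and the orbit $\{f^k(x):k\in\mathbb{Z}\}$ of every $x\in\Gamma$ is dense in $\Gamma$; (ii) there is an open arc $J_0\subset S^1$ such that $S^1\setminus\Gamma=\bigsqcup_{m\in\mathbb{Z}} f^m(J_0)$ (disjoint union). A $\Delta$-map is a continuous $h:S^1\to S^1$ mapping each element of $\Delta$ into some element of $\Delta$; $\mathrm{End}(S^1,\Delta)$ is the monoid of $\Delta$-maps, $\mathrm{End}(Y)=C(Y,Y)$, and $\psi(h)$ is the unique map with $p\circ h=\psi(h)\circ p$. Property (COMP): for every compact $L\subset Y$ there is a compact $K\subset S^1$ with $p(K)=L$. Property (CONT): $\psi:\mathrm{End}(S^1,\Delta)\to\mathrm{End}(Y)$ is continuous with respect to compact open topologies (generated by subbasic sets $\{g: g(K)\subset U\}$, $K$ compact, $U$ open). *)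

theory Defs
  imports "HOL-Analysis.Analysis"
begin

abbreviation S1 :: "complex set" where "S1 \<equiv> sphere 0 1"

abbreviation circ :: "complex topology" where "circ \<equiv> top_of_set S1"

definition circexp :: "real \<Rightarrow> complex" where
  "circexp t = cis (2 * pi * t)"

definition fpow :: "(complex \<Rightarrow> complex) \<Rightarrow> int \<Rightarrow> complex \<Rightarrow> complex" where
  "fpow f k = (if 0 \<le> k then f ^^ nat k else inv_into S1 f ^^ nat (- k))"

definition orient_pres_irrational_rot :: "(complex \<Rightarrow> complex) \<Rightarrow> bool" where
  "orient_pres_irrational_rot f \<longleftrightarrow>
     homeomorphic_map circ circ f \<and>
     (\<exists>F \<rho>. continuous_on UNIV F \<and> strict_mono F \<and> (\<forall>x. F (x + 1) = F x + 1) \<and>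
            (\<forall>x. f (circexp x) = circexp (F x)) \<and>
            (\<lambda>n. (F ^^ n) 0 / real n) \<longlonglongrightarrow> \<rho> \<and> \<rho> \<notin> \<rat>)"

definition cantor_set :: "complex set \<Rightarrow> bool" where
  "cantor_set C \<longleftrightarrow> compact C \<and> C \<noteq> {} \<and> (\<forall>x\<in>C. x islimpt C) \<and>
     (\<forall>x\<in>C. connected_component_set C x = {x})"

definition nowhere_dense_in_circle :: "complex set \<Rightarrow> bool" where
  "nowhere_dense_in_circle C \<longleftrightarrow> C \<subseteq> S1 \<and> circ interior_of (circ closure_of C) = {}"

definition open_arc :: "complex set \<Rightarrow> bool" where
  "open_arc J \<longleftrightarrow> (\<exists>a b. a < b \<and> b \<le> a + 1 \<and> J = circexp ` {a<..<b})"

definition orbit :: "(complex \<Rightarrow> complex) \<Rightarrow> complex \<Rightarrow> complex set" where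
  "orbit f x = {fpow f k x | k. True}"

definition denjoy :: "(complex \<Rightarrow> complex) \<Rightarrow> bool" where
  "denjoy f \<longleftrightarrow> orient_pres_irrational_rot f \<and>
     (\<exists>\<Gamma> J0. \<Gamma> \<subseteq> S1 \<and> cantor_set \<Gamma> \<and> nowhere_dense_in_circle \<Gamma> \<and> f ` \<Gamma> = \<Gamma> \<and>
        (\<forall>x\<in>\<Gamma>. \<Gamma> \<subseteq> closure (orbit f x)) \<and>
        open_arc J0 \<and>
        S1 - \<Gamma> = (\<Union>m. fpow f m ` J0) \<and>
        disjoint_family (\<lambda>m::int. fpow f m ` J0))"

definition orbits :: "(complex \<Rightarrow> complex) \<Rightarrow> complex set set" where
  "orbits f = orbit f ` S1"

definition quotient_top :: "'a topology \<Rightarrow> ('a \<Rightarrow> 'b) \<Rightarrow> 'b topology" where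
  "quotient_top X p = topology (\<lambda>U. U \<subseteq> p ` topspace X \<and> openin X {x \<in> topspace X. p x \<in> U})"

definition compact_open :: "'a topology \<Rightarrow> 'b topology \<Rightarrow> ('a \<Rightarrow> 'b) set \<Rightarrow> ('a \<Rightarrow> 'b) topology" where
  "compact_open X Y F = topology_generated_by
     {{g \<in> F. g ` K \<subseteq> U} | K U. compactin X K \<and> openin Y U}"

definition End_part :: "'a topology \<Rightarrow> 'a set set \<Rightarrow> ('a \<Rightarrow> 'a) set" where
  "End_part X D = {h. continuous_map X X h \<and> h \<in> extensional (topspace X) \<and>
                      (\<forall>A\<in>D. \<exists>B\<in>D. h ` A \<subseteq> B)}"

definition End_top :: "'b topology \<Rightarrow> ('b \<Rightarrow> 'b) set" where
  "End_top Y = {g. continuous_map Y Y g \<and> g \<in> extensional (topspace Y)}"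

definition psi :: "'a topology \<Rightarrow> 'b topology \<Rightarrow> ('a \<Rightarrow> 'b) \<Rightarrow> ('a \<Rightarrow> 'a) \<Rightarrow> ('b \<Rightarrow> 'b)" where
  "psi X Y p h = (THE g. g \<in> extensional (topspace Y) \<and>
                    (\<forall>x\<in>topspace X. p (h x) = g (p x)))"

definition has_COMP :: "'a topology \<Rightarrow> 'b topology \<Rightarrow> ('a \<Rightarrow> 'b) \<Rightarrow> bool" where
  "has_COMP X Y p \<longleftrightarrow> (\<forall>L. compactin Y L \<longrightarrow> (\<exists>K. compactin X K \<and> p ` K = L))"

definition has_CONT :: "'a topology \<Rightarrow> 'a set set \<Rightarrow> 'b topology \<Rightarrow> ('a \<Rightarrow> 'b) \<Rightarrow> bool" where
  "has_CONT X D Y p \<longleftrightarrow>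
     continuous_map (compact_open X X (End_part X D)) (compact_open Y Y (End_top Y)) (psi X Y p)"

end

theory Submission
  imports Defs
begin

(*
  Write p for the projection onto the orbit space Y and \<Gamma> for the minimal Cantor set. Every orbit
  in \<Gamma> is dense in \<Gamma>, and every orbit in a gap accumulates on \<Gamma>, because it meets each gap
  at most once. Hence the only open subset of Y that meets p(\<Gamma>) is Y itself.

  (CONT) is checked on the subbasic neighbourhoods {g. g L \<subseteq> U} of \<psi>(h). If L misses p(\<Gamma>),
  then L lifts to a compact subset of the fundamental arc J0, since p is injective on J0 and maps
  relatively open subsets of J0 to open sets. If L contains p(x) with x \<in> \<Gamma>, then either
  h(x) \<in> \<Gamma> and U = Y, or h(x) lies in a gap and h collapses the whole circle into the orbit of
  h(x); in both cases the compact set S1 serves as a lift.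

  (COMP) fails for L = p(circexp(irrationals of ]a,b[) \<union> {x0}) with x0 \<in> \<Gamma>: L is compact, as
  every open set containing p(x0) is Y, but a compact K with p(K) = L would exhibit the irrationals
  of an interval as the countable union over m of the closed sets {s. f^m(circexp s) \<in> K},
  contradicting Baire's theorem.
*)

section \<open>Quotient topologies and induced maps\<close>

lemma openin_quotient_top:
  "openin (quotient_top X q) U \<longleftrightarrow> U \<subseteq> q ` topspace X \<and> openin X {x \<in> topspace X. q x \<in> U}"
proof -
  have "istopology (\<lambda>U. U \<subseteq> q ` topspace X \<and> openin X {x \<in> topspace X. q x \<in> U})"
    unfolding istopology_def
  proof (rule conjI; intro allI impI)
    fix S T
    assume "S \<subseteq> q ` topspace X \<and> openin X {x \<in> topspace X. q x \<in> S}"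
      and "T \<subseteq> q ` topspace X \<and> openin X {x \<in> topspace X. q x \<in> T}"
    moreover have "{x \<in> topspace X. q x \<in> S \<inter> T} =
        {x \<in> topspace X. q x \<in> S} \<inter> {x \<in> topspace X. q x \<in> T}"
      by blast
    ultimately show "S \<inter> T \<subseteq> q ` topspace X \<and> openin X {x \<in> topspace X. q x \<in> S \<inter> T}"
      by auto
  next
    fix \<K>
    assume \<K>: "\<forall>S\<in>\<K>. S \<subseteq> q ` topspace X \<and> openin X {x \<in> topspace X. q x \<in> S}"
    then have "openin X (\<Union>S\<in>\<K>. {x \<in> topspace X. q x \<in> S})"
      by blast
    moreover have "{x \<in> topspace X. q x \<in> \<Union>\<K>} = (\<Union>S\<in>\<K>. {x \<in> topspace X. q x \<in> S})"
      by blast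
    ultimately show "\<Union>\<K> \<subseteq> q ` topspace X \<and> openin X {x \<in> topspace X. q x \<in> \<Union>\<K>}"
      using \<K> by auto
  qed
  then show ?thesis
    unfolding quotient_top_def by simp
qed

lemma topspace_quotient_top: "topspace (quotient_top X q) = q ` topspace X"
proof (rule subset_antisym)
  show "topspace (quotient_top X q) \<subseteq> q ` topspace X"
    using openin_quotient_top[of X q "topspace (quotient_top X q)"] by auto
  have "{x \<in> topspace X. q x \<in> q ` topspace X} = topspace X"
    by blast
  then have "openin (quotient_top X q) (q ` topspace X)"
    unfolding openin_quotient_top by simp
  then show "q ` topspace X \<subseteq> topspace (quotient_top X q)"
    by (rule openin_subset)
qed

lemma psi_quotient_top:
  assumes compat: "\<And>x x'. \<lbrakk>x \<in> topspace X; x' \<in> topspace X; q x = q x'\<rbrakk> \<Longrightarrow> q (h x) = q (h x')"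
  shows "psi X (quotient_top X q) q h \<in> extensional (q ` topspace X)"
    and "\<And>x. x \<in> topspace X \<Longrightarrow> psi X (quotient_top X q) q h (q x) = q (h x)"
proof -
  let ?P = "\<lambda>g. g \<in> extensional (q ` topspace X) \<and> (\<forall>x\<in>topspace X. q (h x) = g (q x))"
  define g0 where
    "g0 B = (if B \<in> q ` topspace X then q (h (SOME x. x \<in> topspace X \<and> q x = B)) else undefined)" for B
  have "?P g0"
  proof (intro conjI ballI)
    show "g0 \<in> extensional (q ` topspace X)"
      by (simp add: g0_def extensional_def)
  next
    fix x assume x: "x \<in> topspace X"
    define x' where "x' = (SOME x'. x' \<in> topspace X \<and> q x' = q x)"
    have x': "x' \<in> topspace X" "q x' = q x"
      unfolding x'_def using someI_ex[of "\<lambda>x'. x' \<in> topspace X \<and> q x' = q x"] x by blast+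
    have "g0 (q x) = q (h x')"
      using x by (simp add: g0_def x'_def)
    also have "\<dots> = q (h x)"
      by (rule compat[OF x'(1) x x'(2)])
    finally show "q (h x) = g0 (q x)"
      by simp
  qed
  moreover have "g = g0" if g: "?P g" for g
  proof
    fix B
    show "g B = g0 B"
    proof (cases "B \<in> q ` topspace X")
      case True
      then obtain x where "x \<in> topspace X" "B = q x"
        by blast
      then show ?thesis
        using g \<open>?P g0\<close> by simp
    next
      case False
      then show ?thesis
        using g \<open>?P g0\<close> by (simp add: extensional_def)
    qed
  qed
  ultimately have "?P (psi X (quotient_top X q) q h)"
    unfolding psi_def topspace_quotient_top by (rule theI)
  then show "psi X (quotient_top X q) q h \<in> extensional (q ` topspace X)"
    and "\<And>x. x \<in> topspace X \<Longrightarrow> psi X (quotient_top X q) q h (q x) = q (h x)"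
    by auto
qed

lemma continuous_map_psi_quotient_top:
  assumes h: "continuous_map X X h"
    and compat: "\<And>x x'. \<lbrakk>x \<in> topspace X; x' \<in> topspace X; q x = q x'\<rbrakk> \<Longrightarrow> q (h x) = q (h x')"
  shows "continuous_map (quotient_top X q) (quotient_top X q) (psi X (quotient_top X q) q h)"
proof -
  let ?g = "psi X (quotient_top X q) q h"
  have g: "?g (q x) = q (h x)" if "x \<in> topspace X" for x
    using psi_quotient_top(2)[of X q h, OF compat that] by blast
  have hX: "h x \<in> topspace X" if "x \<in> topspace X" for x
    using h that by (simp add: continuous_map_def Pi_iff)
  have opens: "openin (quotient_top X q) {B \<in> q ` topspace X. ?g B \<in> U}"
    if U: "openin (quotient_top X q) U" for U
  proof -
    have "openin X {x \<in> topspace X. h x \<in> {z \<in> topspace X. q z \<in> U}}"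
      using U h openin_continuous_map_preimage unfolding openin_quotient_top by blast
    moreover have "h x \<in> {z \<in> topspace X. q z \<in> U} \<longleftrightarrow> q x \<in> {B \<in> q ` topspace X. ?g B \<in> U}"
      if "x \<in> topspace X" for x
      using g[OF that] hX[OF that] that by auto
    then have "{x \<in> topspace X. h x \<in> {z \<in> topspace X. q z \<in> U}} =
        {x \<in> topspace X. q x \<in> {B \<in> q ` topspace X. ?g B \<in> U}}"
      by blast
    ultimately show ?thesis
      unfolding openin_quotient_top by auto
  qed
  show ?thesis
    unfolding continuous_map_def topspace_quotient_top
  proof (intro conjI allI impI Pi_I)
    fix B assume "B \<in> q ` topspace X"
    then obtain x where x: "x \<in> topspace X" "B = q x"
      by blast
    show "?g B \<in> q ` topspace X"
      using g[OF x(1)] hX[OF x(1)] x(2) by simp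
  next
    fix U assume "openin (quotient_top X q) U"
    then show "openin (quotient_top X q) {B \<in> q ` topspace X. ?g B \<in> U}"
      by (rule opens)
  qed
qed

section \<open>Compact-open topologies\<close>

lemma topspace_compact_open: "topspace (compact_open X Y F) = F"
proof -
  have "F = {g \<in> F. g ` {} \<subseteq> topspace Y}"
    by simp
  then have "F \<in> {{g \<in> F. g ` K \<subseteq> U} | K U. compactin X K \<and> openin Y U}"
    by blast
  then show ?thesis
    unfolding compact_open_def topology_generated_by_topspace by blast
qed

lemma continuous_map_compact_openI:
  assumes maps: "\<Phi> ` F \<subseteq> G"
    and nbhd: "\<And>h0 L U. \<lbrakk>h0 \<in> F; compactin Y L; openin Y' U; \<Phi> h0 ` L \<subseteq> U\<rbrakk> \<Longrightarrow>
      \<exists>K V. compactin X K \<and> openin X' V \<and> h0 ` K \<subseteq> V \<and> (\<forall>h\<in>F. h ` K \<subseteq> V \<longrightarrow> \<Phi> h ` L \<subseteq> U)"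
  shows "continuous_map (compact_open X X' F) (compact_open Y Y' G) \<Phi>"
  unfolding compact_open_def[of Y]
proof (rule continuous_on_generated_topo)
  fix W assume "W \<in> {{g \<in> G. g ` L \<subseteq> U} | L U. compactin Y L \<and> openin Y' U}"
  then obtain L U where W: "W = {g \<in> G. g ` L \<subseteq> U}" and L: "compactin Y L" and U: "openin Y' U"
    by blast
  show "openin (compact_open X X' F) (\<Phi> -` W \<inter> topspace (compact_open X X' F))"
    unfolding topspace_compact_open
  proof (subst openin_subopen, intro ballI)
    fix h0 assume h0: "h0 \<in> \<Phi> -` W \<inter> F"
    then have "\<Phi> h0 ` L \<subseteq> U"
      using W by blast
    then obtain K V where K: "compactin X K" and V: "openin X' V" and "h0 ` K \<subseteq> V"
      and sub: "\<forall>h\<in>F. h ` K \<subseteq> V \<longrightarrow> \<Phi> h ` L \<subseteq> U"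
      using nbhd[of h0 L U] h0 L U by blast
    let ?T = "{h \<in> F. h ` K \<subseteq> V}"
    have "openin (compact_open X X' F) ?T"
      unfolding compact_open_def using K V by (intro topology_generated_by_Basis) blast
    moreover have "?T \<subseteq> \<Phi> -` W \<inter> F"
      using sub maps W by blast
    ultimately show "\<exists>T. openin (compact_open X X' F) T \<and> h0 \<in> T \<and> T \<subseteq> \<Phi> -` W \<inter> F"
      using h0 \<open>h0 ` K \<subseteq> V\<close> by blast
  qed
next
  have G: "\<Union>{{g \<in> G. g ` L \<subseteq> U} | L U. compactin Y L \<and> openin Y' U} = G"
    using topspace_compact_open[of Y Y' G] unfolding compact_open_def topology_generated_by_topspace .
  show "\<Phi> ` topspace (compact_open X X' F) \<subseteq> \<Union>{{g \<in> G. g ` L \<subseteq> U} | L U. compactin Y L \<and> openin Y' U}"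
    unfolding topspace_compact_open G by (rule maps)
qed

section \<open>General topology of the line and the circle\<close>

lemma Rats_dense_in_interval_avoiding:
  fixes c d x e q :: real
  assumes "c < d" "x \<in> {c..d}" "0 < e"
  obtains r where "r \<in> \<rat>" "r \<in> {c..d}" "dist r x < e" "r \<noteq> q"
proof -
  define lo hi where "lo = max c (x - e)" and "hi = min d (x + e)"
  have "lo < hi"
    using assms by (auto simp: lo_def hi_def)
  obtain r1 where r1: "r1 \<in> \<rat>" "lo < r1" "r1 < hi"
    using Rats_dense_in_real[OF \<open>lo < hi\<close>] by blast
  obtain r2 where r2: "r2 \<in> \<rat>" "r1 < r2" "r2 < hi"
    using Rats_dense_in_real[OF \<open>r1 < hi\<close>] by blast
  have near: "r \<in> {c..d} \<and> dist r x < e" if "lo < r" "r < hi" for r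
    using that by (auto simp: lo_def hi_def dist_real_def)
  show thesis
  proof (cases "r1 = q")
    case True
    then show thesis
      using that[of r2] near[of r2] r1 r2 by auto
  next
    case False
    then show thesis
      using that[of r1] near[of r1] r1 by auto
  qed
qed

lemma irrationals_not_countable_Union_closed:
  fixes c d :: real and \<C> :: "real set set"
  assumes "c < d" "countable \<C>" "\<And>C. C \<in> \<C> \<Longrightarrow> closed C"
  shows "\<Union>\<C> \<noteq> {c..d} - \<rat>"
proof
  assume irr: "\<Union>\<C> = {c..d} - \<rat>"
  define \<G> where "\<G> = (\<lambda>C. {c..d} - C) ` \<C> \<union> (\<lambda>q. {c..d} - {q}) ` \<rat>"
  have "countable \<G>"
    unfolding \<G>_def using \<open>countable \<C>\<close> countable_rat by blast
  have dense: "{c..d} \<subseteq> closure T" if T: "{c..d} \<inter> \<rat> - {q} \<subseteq> T" for T q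
  proof
    fix x assume x: "x \<in> {c..d}"
    show "x \<in> closure T"
      unfolding closure_approachable
    proof (intro allI impI)
      fix e :: real assume "0 < e"
      then obtain r where "r \<in> \<rat>" "r \<in> {c..d}" "dist r x < e" "r \<noteq> q"
        using Rats_dense_in_interval_avoiding[OF \<open>c < d\<close> x] by metis
      then show "\<exists>y\<in>T. dist y x < e"
        using T by blast
    qed
  qed
  have "openin (top_of_set {c..d}) T \<and> {c..d} \<subseteq> closure T" if T: "T \<in> \<G>" for T
  proof (cases "T \<in> (\<lambda>q. {c..d} - {q}) ` \<rat>")
    case True
    then obtain q where "T = {c..d} \<inter> - {q}"
      by blast
    then show ?thesis
      using dense[of q T] by (auto simp: openin_open_Int)
  next
    case False
    then obtain C where C: "C \<in> \<C>" "T = {c..d} \<inter> - C"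
      using T False unfolding \<G>_def by blast
    have "openin (top_of_set {c..d}) T"
      using C by (simp add: openin_open_Int open_Compl assms(3))
    moreover have "{c..d} \<inter> \<rat> - {c} \<subseteq> T"
      using irr C by blast
    ultimately show ?thesis
      using dense by blast
  qed
  then have "{c..d} \<subseteq> closure (\<Inter>\<G>)"
    using Baire[OF closed_atLeastAtMost \<open>countable \<G>\<close>] by blast
  moreover have "\<Inter>\<G> = {}"
  proof (rule equals0I)
    fix y assume y: "y \<in> \<Inter>\<G>"
    consider "y \<in> \<rat>" | "y \<notin> {c..d}" | "y \<in> \<Union>\<C>"
      using irr by blast
    then show False
    proof cases
      case 1
      then have "{c..d} - {y} \<in> \<G>"
        unfolding \<G>_def by blast
      then show False
        using y by blast
    next
      case 2
      have "{c..d} - {0} \<in> \<G>"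
        unfolding \<G>_def using Rats_0 by (intro UnI2 imageI)
      then show False
        using y 2 by blast
    next
      case 3
      then obtain C where "C \<in> \<C>" "y \<in> C"
        by blast
      then have "{c..d} - C \<in> \<G>"
        unfolding \<G>_def by blast
      then show False
        using y \<open>y \<in> C\<close> by blast
    qed
  qed
  ultimately show False
    using \<open>c < d\<close> by simp
qed

lemma openin_meets_closure:
  assumes "openin (top_of_set A) W" "x \<in> W" "x \<in> closure S" "S \<subseteq> A"
  obtains u where "u \<in> S" "u \<in> W"
proof -
  obtain T where "open T" "W = A \<inter> T"
    using assms(1) openin_open by blast
  then have "T \<inter> S \<noteq> {}"
    using assms(2,3) open_Int_closure_eq_empty by blast
  then show thesis
    using that \<open>W = A \<inter> T\<close> assms(4) by blast
qed

lemma openin_meets_limpt: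
  assumes "openin (top_of_set A) W" "x \<in> W" "x islimpt S" "S \<subseteq> A"
  obtains u where "u \<in> S" "u \<in> W" "u \<noteq> x"
proof -
  obtain T where "open T" "W = A \<inter> T"
    using assms(1) openin_open by blast
  then obtain u where "u \<in> S" "u \<in> T" "u \<noteq> x"
    using assms(2,3) islimptE by blast
  then show thesis
    using that \<open>W = A \<inter> T\<close> assms(4) by blast
qed

lemma continuous_map_funpow: "continuous_map X X h \<Longrightarrow> continuous_map X X (h ^^ n)"
  by (induction n) (auto intro: continuous_map_compose)

lemma continuous_on_circexp: "continuous_on A circexp"
  unfolding circexp_def by (intro continuous_intros)

lemma norm_circexp [simp]: "norm (circexp t) = 1"
  by (simp add: circexp_def)

lemma circexp_in_S1: "circexp t \<in> S1"
  by simp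

lemma circexp_eq_iff: "circexp s = circexp t \<longleftrightarrow> (\<exists>n::int. s = t + n)"
proof -
  have "circexp s = circexp t \<longleftrightarrow> sin (2 * pi * s) = sin (2 * pi * t) \<and> cos (2 * pi * s) = cos (2 * pi * t)"
    by (auto simp: circexp_def complex_eq_iff)
  also have "\<dots> \<longleftrightarrow> (\<exists>n::int. 2 * pi * s = 2 * pi * t + 2 * pi * n)"
    by (rule sin_cos_eq_iff)
  also have "\<dots> \<longleftrightarrow> (\<exists>n::int. s = t + n)"
  proof -
    have "2 * pi * s = 2 * pi * t + 2 * pi * n \<longleftrightarrow> s = t + n" for n :: real
      by (simp flip: distrib_left)
    then show ?thesis
      by simp
  qed
  finally show ?thesis .
qed

lemma inj_on_circexp:
  assumes "b \<le> a + 1"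
  shows "inj_on circexp {a<..<b}"
proof
  fix s t assume "s \<in> {a<..<b}" "t \<in> {a<..<b}" "circexp s = circexp t"
  then obtain n :: int where "s = t + n" "\<bar>real_of_int n\<bar> < 1"
    using assms by (auto simp: circexp_eq_iff)
  then show "s = t"
    by simp
qed

lemma openin_circexp_arc:
  assumes "b \<le> a + 1"
  shows "openin circ (circexp ` {a<..<b})"
proof -
  have closed: "closed (circexp ` {b..a+1})"
    by (intro compact_imp_closed compact_continuous_image continuous_on_circexp compact_Icc)
  have "circexp ` {a<..<b} = S1 \<inter> - circexp ` {b..a+1}"
  proof (intro equalityI subsetI)
    fix z assume "z \<in> circexp ` {a<..<b}"
    then obtain s where s: "s \<in> {a<..<b}" "z = circexp s"
      by blast
    have "circexp s \<notin> circexp ` {b..a+1}"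
    proof
      assume "circexp s \<in> circexp ` {b..a+1}"
      then obtain s' where "s' \<in> {b..a+1}" "circexp s' = circexp s"
        by auto
      then obtain n :: int where "s' = s + n"
        by (auto simp: circexp_eq_iff)
      then have "(0::real) < of_int n" "of_int n < (1::real)"
        using s \<open>s' \<in> {b..a+1}\<close> by auto
      then show False
        by simp
    qed
    then show "z \<in> S1 \<inter> - circexp ` {b..a+1}"
      using s by simp
  next
    fix z assume z: "z \<in> S1 \<inter> - circexp ` {b..a+1}"
    define t where "t = Arg z / (2 * pi)"
    define s where "s = t + of_int \<lfloor>a + 1 - t\<rfloor>"
    have "z \<noteq> 0"
      using z by auto
    then have "z = circexp t"
      using z cis_Arg[of z] by (auto simp: t_def circexp_def sgn_eq)
    also have "\<dots> = circexp s"
      unfolding s_def circexp_eq_iff by (rule exI[of _ "- \<lfloor>a + 1 - t\<rfloor>"]) simp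
    finally have "z = circexp s" .
    moreover have "a < s" "s \<le> a + 1"
      unfolding s_def by linarith+
    ultimately have "s \<in> {a<..<b}"
      using z by (cases "s < b") auto
    then show "z \<in> circexp ` {a<..<b}"
      using \<open>z = circexp s\<close> by blast
  qed
  then show ?thesis
    using openin_open_Int[OF open_Compl[OF closed]] by simp
qed

section \<open>Orbits of a circle homeomorphism\<close>

locale circle_homeomorphism =
  fixes f :: "complex \<Rightarrow> complex"
  assumes homeomorphic: "homeomorphic_map circ circ f"
begin

abbreviation orbit_space :: "complex set topology" where
  "orbit_space \<equiv> quotient_top circ (orbit f)"

abbreviation delta_maps :: "(complex \<Rightarrow> complex) set" where
  "delta_maps \<equiv> End_part circ (orbits f)"

lemma f_in_S1: "x \<in> S1 \<Longrightarrow> f x \<in> S1"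
  using homeomorphic_imp_surjective_map[OF homeomorphic] by auto

lemma f_image_S1: "f ` S1 = S1"
  using homeomorphic_imp_surjective_map[OF homeomorphic] by simp

lemma inj_on_f: "inj_on f S1"
  using homeomorphic_imp_injective_map[OF homeomorphic] by simp

lemma inv_into_in_S1: "y \<in> S1 \<Longrightarrow> inv_into S1 f y \<in> S1"
  by (metis f_image_S1 inv_into_into)

lemma f_inv_into: "y \<in> S1 \<Longrightarrow> f (inv_into S1 f y) = y"
  by (metis f_image_S1 f_inv_into_f)

lemma inv_into_f: "x \<in> S1 \<Longrightarrow> inv_into S1 f (f x) = x"
  by (meson inj_on_f inv_into_f_f)

lemma continuous_map_inv_into: "continuous_map circ circ (inv_into S1 f)"
proof -
  obtain g where g: "homeomorphic_maps circ circ f g"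
    using homeomorphic homeomorphic_map_maps by blast
  then have "continuous_map circ circ g"
    by (simp add: homeomorphic_maps_def)
  moreover have "g y = inv_into S1 f y" if "y \<in> S1" for y
    using g that f_inv_into inv_into_in_S1 unfolding homeomorphic_maps_def by (metis topspace_euclidean_subtopology)
  ultimately show ?thesis
    using continuous_map_eq by (metis topspace_euclidean_subtopology)
qed

lemma funpow_in_S1: "(\<And>y. y \<in> S1 \<Longrightarrow> h y \<in> S1) \<Longrightarrow> x \<in> S1 \<Longrightarrow> (h ^^ n) x \<in> S1"
  by (induction n) auto

lemma fpow_in_S1: "x \<in> S1 \<Longrightarrow> fpow f k x \<in> S1"
  unfolding fpow_def using funpow_in_S1 f_in_S1 inv_into_in_S1 by simp

lemma fpow_0 [simp]: "fpow f 0 x = x"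
  by (simp add: fpow_def)

lemma fpow_add_1: "x \<in> S1 \<Longrightarrow> fpow f (k + 1) x = f (fpow f k x)"
proof (cases "0 \<le> k")
  case True
  then have "nat (k + 1) = Suc (nat k)"
    by simp
  then show ?thesis
    using True by (simp add: fpow_def)
next
  case False
  assume x: "x \<in> S1"
  have "nat (- k) = Suc (nat (- (k + 1)))"
    using False by simp
  then have "f (fpow f k x) = f (inv_into S1 f ((inv_into S1 f ^^ nat (- (k + 1))) x))"
    using False by (simp add: fpow_def)
  also have "\<dots> = (inv_into S1 f ^^ nat (- (k + 1))) x"
    using f_inv_into funpow_in_S1[of "inv_into S1 f", OF inv_into_in_S1 x] by blast
  also have "\<dots> = fpow f (k + 1) x"
    using False by (simp add: fpow_def)
  finally show ?thesis
    by simp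
qed

lemma fpow_diff_1: "x \<in> S1 \<Longrightarrow> fpow f (k - 1) x = inv_into S1 f (fpow f k x)"
  using fpow_add_1[of x "k - 1"] inv_into_f fpow_in_S1 by simp

lemma fpow_add: "x \<in> S1 \<Longrightarrow> fpow f m (fpow f n x) = fpow f (m + n) x"
proof (induction m rule: int_induct[where k = 0])
  case base
  then show ?case by simp
next
  case (step1 i)
  then show ?case
    using fpow_add_1 fpow_in_S1 by (metis add.commute add.left_commute)
next
  case (step2 i)
  then show ?case
    using fpow_diff_1 fpow_in_S1 by (metis add_diff_eq diff_add_eq)
qed

lemma homeomorphic_map_fpow: "homeomorphic_map circ circ (fpow f k)"
proof -
  have "continuous_map circ circ (fpow f j)" for j
  proof -
    have "continuous_map circ circ (f ^^ nat j)" "continuous_map circ circ (inv_into S1 f ^^ nat (- j))"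
      using continuous_map_funpow homeomorphic_imp_continuous_map[OF homeomorphic]
        continuous_map_inv_into by blast+
    then show ?thesis
      unfolding fpow_def by (cases "0 \<le> j") simp_all
  qed
  then have "homeomorphic_maps circ circ (fpow f k) (fpow f (- k))"
    unfolding homeomorphic_maps_def using fpow_add by simp
  then show ?thesis
    using homeomorphic_map_maps by blast
qed

lemma openin_fpow_image: "openin circ W \<Longrightarrow> openin circ (fpow f k ` W)"
  using homeomorphic_map_fpow homeomorphic_map_openness openin_subset
  by (metis topspace_euclidean_subtopology)

lemma closed_preimage_fpow_circexp:
  assumes "closed K"
  shows "closed ({c..d} \<inter> (\<lambda>s. fpow f m (circexp s)) -` K)"
proof -
  have "continuous_on S1 (fpow f m)"
    using homeomorphic_imp_continuous_map[OF homeomorphic_map_fpow]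
    by (simp add: continuous_map_in_subtopology)
  then have "continuous_on {c..d} (\<lambda>s. fpow f m (circexp s))"
    by (rule continuous_on_compose2[OF _ continuous_on_circexp]) (use circexp_in_S1 in blast)
  then show ?thesis
    by (rule continuous_closed_preimage[OF _ closed_atLeastAtMost assms])
qed

lemma mem_orbit_iff: "y \<in> orbit f x \<longleftrightarrow> (\<exists>k. y = fpow f k x)"
  by (auto simp: orbit_def)

lemma orbit_refl: "x \<in> orbit f x"
  unfolding mem_orbit_iff by (rule exI[of _ 0]) simp

lemma orbit_subset_S1: "x \<in> S1 \<Longrightarrow> orbit f x \<subseteq> S1"
  using fpow_in_S1 by (auto simp: mem_orbit_iff)

lemma orbit_eq:
  assumes "x \<in> S1" "y \<in> orbit f x"
  shows "orbit f y = orbit f x"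
proof -
  obtain k where k: "y = fpow f k x"
    using assms mem_orbit_iff by blast
  have "fpow f m y = fpow f (m + k) x" "fpow f m x = fpow f (m - k) y" for m
    using k fpow_add[OF assms(1)] by simp_all
  then show ?thesis
    unfolding orbit_def by blast
qed

lemma orbit_eq_iff: "x \<in> S1 \<Longrightarrow> y \<in> S1 \<Longrightarrow> orbit f x = orbit f y \<longleftrightarrow> y \<in> orbit f x"
  using orbit_eq[of x y] orbit_refl[of y] by auto

lemma saturation_eq_Union_fpow_images:
  assumes "W \<subseteq> S1"
  shows "{x \<in> S1. orbit f x \<in> orbit f ` W} = (\<Union>k. fpow f k ` W)"
proof (intro equalityI subsetI)
  fix x assume "x \<in> {x \<in> S1. orbit f x \<in> orbit f ` W}"
  then obtain w where "x \<in> S1" "w \<in> W" "orbit f w = orbit f x"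
    by auto
  then have "x \<in> orbit f w"
    using orbit_eq_iff assms by blast
  then show "x \<in> (\<Union>k. fpow f k ` W)"
    using \<open>w \<in> W\<close> mem_orbit_iff by blast
next
  fix x assume "x \<in> (\<Union>k. fpow f k ` W)"
  then obtain k w where "w \<in> W" "x = fpow f k w"
    by blast
  moreover have "w \<in> S1"
    using \<open>w \<in> W\<close> assms by blast
  ultimately show "x \<in> {x \<in> S1. orbit f x \<in> orbit f ` W}"
    using fpow_in_S1 orbit_eq mem_orbit_iff by blast
qed

lemma topspace_orbit_space: "topspace orbit_space = orbit f ` S1"
  by (simp add: topspace_quotient_top)

lemma openin_orbit_space:
  "openin orbit_space U \<longleftrightarrow> U \<subseteq> orbit f ` S1 \<and> openin circ {x \<in> S1. orbit f x \<in> U}"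
  by (simp add: openin_quotient_top)

lemma openin_orbit_space_image:
  assumes "openin circ W"
  shows "openin orbit_space (orbit f ` W)"
proof -
  have "W \<subseteq> S1"
    using openin_subset[OF assms] by simp
  moreover have "openin circ (\<Union>k. fpow f k ` W)"
    using openin_fpow_image[OF assms] by blast
  ultimately show ?thesis
    unfolding openin_orbit_space using saturation_eq_Union_fpow_images by auto
qed

lemma continuous_map_delta_map: "h \<in> delta_maps \<Longrightarrow> continuous_map circ circ h"
  unfolding End_part_def by blast

lemma delta_map_in_S1:
  assumes "h \<in> delta_maps" "x \<in> S1"
  shows "h x \<in> S1"
proof -
  have "h ` S1 \<subseteq> S1"
    using continuous_map_image_subset_topspace[OF continuous_map_delta_map[OF assms(1)]]
    by (simp only: topspace_euclidean_subtopology)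
  then show ?thesis
    using assms(2) by blast
qed

lemma delta_map_orbit:
  assumes h: "h \<in> delta_maps" and x: "x \<in> S1" and u: "u \<in> orbit f x"
  shows "h u \<in> orbit f (h x)"
proof -
  have "\<forall>A\<in>orbits f. \<exists>B\<in>orbits f. h ` A \<subseteq> B"
    using h by (simp add: End_part_def)
  moreover have "orbit f x \<in> orbits f"
    using x by (simp add: orbits_def)
  ultimately obtain B where "B \<in> orbits f" and B: "h ` orbit f x \<subseteq> B"
    by blast
  then obtain s where s: "s \<in> S1" "B = orbit f s"
    unfolding orbits_def by blast
  have "h x \<in> orbit f s"
    using B s(2) orbit_refl by blast
  then have "orbit f (h x) = orbit f s"
    by (rule orbit_eq[OF s(1)])
  then show ?thesis
    using B s(2) u by blast
qed

lemma delta_map_respects_orbits: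
  assumes h: "h \<in> delta_maps" and x: "x \<in> topspace circ" "x' \<in> topspace circ"
    and eq: "orbit f x = orbit f x'"
  shows "orbit f (h x) = orbit f (h x')"
proof -
  have "x' \<in> orbit f x"
    using eq orbit_refl by metis
  then have "h x' \<in> orbit f (h x)"
    using delta_map_orbit[OF h] x by simp
  then show ?thesis
    using orbit_eq delta_map_in_S1[OF h] x by (metis topspace_euclidean_subtopology)
qed

lemma psi_delta_map:
  assumes h: "h \<in> delta_maps" and x: "x \<in> S1"
  shows "psi circ orbit_space (orbit f) h (orbit f x) = orbit f (h x)"
proof -
  have "x \<in> topspace circ"
    using x by simp
  then show ?thesis
    using psi_quotient_top(2)[of circ "orbit f" h x, OF delta_map_respects_orbits[OF h]] by blast
qed

lemma psi_delta_map_in_End_top: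
  assumes h: "h \<in> delta_maps"
  shows "psi circ orbit_space (orbit f) h \<in> End_top orbit_space"
proof -
  have "continuous_map orbit_space orbit_space (psi circ orbit_space (orbit f) h)"
    by (rule continuous_map_psi_quotient_top[of circ h "orbit f",
          OF continuous_map_delta_map[OF h] delta_map_respects_orbits[OF h]])
  moreover have "psi circ orbit_space (orbit f) h \<in> extensional (topspace orbit_space)"
    using psi_quotient_top(1)[of circ "orbit f" h, OF delta_map_respects_orbits[OF h]]
    by (simp only: topspace_quotient_top)
  ultimately show ?thesis
    unfolding End_top_def by blast
qed

lemma psi_image_subset:
  assumes h: "h \<in> delta_maps" and K: "K \<subseteq> S1" "L \<subseteq> orbit f ` K"
    and hK: "h ` K \<subseteq> {z \<in> S1. orbit f z \<in> U}"
  shows "psi circ orbit_space (orbit f) h ` L \<subseteq> U"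
proof
  fix y assume "y \<in> psi circ orbit_space (orbit f) h ` L"
  then obtain k where "k \<in> K" "y = psi circ orbit_space (orbit f) h (orbit f k)"
    using K by blast
  moreover have "k \<in> S1"
    using K \<open>k \<in> K\<close> by blast
  moreover have "orbit f (h k) \<in> U"
    using hK \<open>k \<in> K\<close> by blast
  ultimately show "y \<in> U"
    using psi_delta_map[OF h] by simp
qed

end

section \<open>Denjoy systems\<close>

locale denjoy_system = circle_homeomorphism +
  fixes \<Gamma> :: "complex set" and a b :: real
  assumes \<Gamma>_subset: "\<Gamma> \<subseteq> S1"
    and \<Gamma>_nonempty: "\<Gamma> \<noteq> {}"
    and \<Gamma>_minimal: "\<And>x. x \<in> \<Gamma> \<Longrightarrow> \<Gamma> \<subseteq> closure (orbit f x)"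
    and arc: "a < b" "b \<le> a + 1"
    and gaps_Union: "S1 - \<Gamma> = (\<Union>m. fpow f m ` circexp ` {a<..<b})"
    and gaps_disjoint: "disjoint_family (\<lambda>m::int. fpow f m ` circexp ` {a<..<b})"
begin

abbreviation J0 :: "complex set" where
  "J0 \<equiv> circexp ` {a<..<b}"

abbreviation gap :: "int \<Rightarrow> complex set" where
  "gap m \<equiv> fpow f m ` J0"

lemma gap_subset: "gap m \<subseteq> S1 - \<Gamma>"
  using gaps_Union by blast

lemma gap_0: "gap 0 = J0"
  by (simp add: fpow_def)

lemma J0_subset: "J0 \<subseteq> S1 - \<Gamma>"
  using gap_subset[of 0] by (simp only: gap_0)

lemma openin_gap: "openin circ (gap m)"
  using openin_fpow_image openin_circexp_arc arc by blast

lemma in_gap: "t \<in> S1 - \<Gamma> \<Longrightarrow> \<exists>j. t \<in> gap j"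
  using gaps_Union by blast

lemma fpow_in_gap:
  assumes "u \<in> gap n"
  shows "fpow f k u \<in> gap (k + n)"
proof -
  obtain v where "v \<in> J0" "u = fpow f n v"
    using assms by blast
  moreover have "v \<in> S1"
    using \<open>v \<in> J0\<close> J0_subset by blast
  ultimately show ?thesis
    using fpow_add by auto
qed

lemma gap_index_unique: "u \<in> gap m \<Longrightarrow> u \<in> gap n \<Longrightarrow> m = n"
  using gaps_disjoint unfolding disjoint_family_on_def by blast

lemma orbit_meets_gap_once:
  assumes s: "s \<in> S1" and "u \<in> orbit f s" "v \<in> orbit f s" and u: "u \<in> gap j" and "v \<in> gap j"
  shows "u = v"
proof -
  obtain k l where k: "u = fpow f k s" and l: "v = fpow f l s"
    using assms mem_orbit_iff by blast
  then have "v = fpow f (l - k) u"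
    using fpow_add[OF s] by simp
  then have "v \<in> gap (l - k + j)"
    using fpow_in_gap[OF u] by simp
  then have "l = k"
    using gap_index_unique \<open>v \<in> gap j\<close> by fastforce
  then show ?thesis
    using k l by simp
qed

lemma orbit_of_gap_point:
  assumes "t \<in> S1 - \<Gamma>"
  shows "orbit f t \<subseteq> S1 - \<Gamma>"
proof
  fix y assume "y \<in> orbit f t"
  then obtain k where "y = fpow f k t"
    using mem_orbit_iff by blast
  moreover obtain j where "t \<in> gap j"
    using in_gap assms by blast
  ultimately show "y \<in> S1 - \<Gamma>"
    using fpow_in_gap gap_subset by blast
qed

lemma orbit_of_\<Gamma>_point:
  assumes x: "x \<in> \<Gamma>"
  shows "orbit f x \<subseteq> \<Gamma>"
proof
  fix y assume y: "y \<in> orbit f x"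
  have "x \<in> S1"
    using x \<Gamma>_subset by blast
  show "y \<in> \<Gamma>"
  proof (rule ccontr)
    assume "y \<notin> \<Gamma>"
    then have "y \<in> S1 - \<Gamma>"
      using y orbit_subset_S1 \<open>x \<in> S1\<close> by blast
    moreover have "x \<in> orbit f y"
      using orbit_eq[OF \<open>x \<in> S1\<close> y] orbit_refl by blast
    ultimately show False
      using orbit_of_gap_point x by blast
  qed
qed

lemma orbit_meets_J0:
  assumes "t \<in> S1 - \<Gamma>"
  obtains u where "u \<in> J0" "u \<in> orbit f t"
proof -
  obtain j where "t \<in> gap j"
    using in_gap assms by blast
  then have "fpow f (- j) t \<in> J0"
    using fpow_in_gap[of t j "- j"] by (simp add: gap_0)
  then show thesis
    using that mem_orbit_iff by blast
qed

lemma inj_on_orbit_J0: "inj_on (orbit f) J0"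
proof
  fix u v assume "u \<in> J0" "v \<in> J0" "orbit f u = orbit f v"
  moreover have "u \<in> S1"
    using \<open>u \<in> J0\<close> J0_subset by blast
  moreover have "v \<in> orbit f u"
    using \<open>orbit f u = orbit f v\<close> orbit_refl by metis
  moreover have "u \<in> gap 0" "v \<in> gap 0"
    using \<open>u \<in> J0\<close> \<open>v \<in> J0\<close> gap_0 by simp_all
  ultimately show "u = v"
    using orbit_meets_gap_once[OF \<open>u \<in> S1\<close> orbit_refl] by blast
qed

lemma infinite_orbit_of_gap_point:
  assumes "t \<in> S1 - \<Gamma>"
  shows "infinite (orbit f t)"
proof -
  obtain j where t: "t \<in> gap j"
    using in_gap assms by blast
  have "inj (\<lambda>k. fpow f k t)"
  proof (rule injI)
    fix k l assume "fpow f k t = fpow f l t"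
    then have "k + j = l + j"
      using fpow_in_gap[OF t] gap_index_unique by metis
    then show "k = l"
      by simp
  qed
  moreover have "range (\<lambda>k. fpow f k t) = orbit f t"
    by (auto simp: mem_orbit_iff)
  ultimately show ?thesis
    using infinite_UNIV_int finite_imageD by metis
qed

text \<open>A limit point of an orbit cannot lie in a gap, since an orbit meets each gap at most once.\<close>

lemma closure_orbit_meets_\<Gamma>:
  assumes t: "t \<in> S1"
  obtains w where "w \<in> \<Gamma>" "w \<in> closure (orbit f t)"
proof (cases "t \<in> \<Gamma>")
  case True
  then show thesis
    using that orbit_refl closure_subset by blast
next
  case False
  then have "infinite (orbit f t)"
    using t infinite_orbit_of_gap_point by blast
  then obtain w where w: "w \<in> S1" "w islimpt orbit f t"
    using compact_eq_Bolzano_Weierstrass[of S1] orbit_subset_S1[OF t] by auto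
  have "w \<in> \<Gamma>"
  proof (rule ccontr)
    assume "w \<notin> \<Gamma>"
    then obtain j where wj: "w \<in> gap j"
      using in_gap w(1) by blast
    obtain u where u: "u \<in> orbit f t" "u \<in> gap j" "u \<noteq> w"
      by (rule openin_meets_limpt[OF openin_gap wj w(2) orbit_subset_S1[OF t]])
    have "w \<in> gap j - {u}"
      using wj u(3) by blast
    then obtain v where v: "v \<in> orbit f t" "v \<in> gap j - {u}"
      by (rule openin_meets_limpt[OF openin_delete[OF openin_gap] _ w(2) orbit_subset_S1[OF t]])
    then show False
      using orbit_meets_gap_once[OF t u(1) v(1) u(2)] by blast
  qed
  moreover have "w \<in> closure (orbit f t)"
    using w(2) unfolding closure_def by blast
  ultimately show thesis
    by (rule that)
qed

lemma open_nbhd_of_\<Gamma>_point: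
  assumes U: "openin orbit_space U" and x: "x \<in> \<Gamma>" "orbit f x \<in> U"
  shows "topspace orbit_space \<subseteq> U"
proof -
  let ?V = "{z \<in> S1. orbit f z \<in> U}"
  have V: "openin circ ?V"
    using U openin_orbit_space by blast
  have enter: "t \<in> ?V" if t: "t \<in> S1" and w: "w \<in> ?V" "w \<in> closure (orbit f t)" for t w
  proof -
    obtain u where "u \<in> orbit f t" "u \<in> ?V"
      by (rule openin_meets_closure[OF V w orbit_subset_S1[OF t]])
    then show ?thesis
      using orbit_eq[OF t] t by auto
  qed
  have "x \<in> ?V"
    using x \<Gamma>_subset by blast
  then have \<Gamma>V: "\<Gamma> \<subseteq> ?V"
    using enter \<Gamma>_minimal x(1) \<Gamma>_subset by blast
  have "S1 \<subseteq> ?V"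
  proof
    fix t assume "t \<in> S1"
    then obtain w where "w \<in> \<Gamma>" "w \<in> closure (orbit f t)"
      by (rule closure_orbit_meets_\<Gamma>)
    then show "t \<in> ?V"
      using enter \<Gamma>V \<open>t \<in> S1\<close> by blast
  qed
  then show ?thesis
    unfolding topspace_orbit_space by blast
qed

lemma compactin_orbit_space_through_\<Gamma>:
  assumes "L \<subseteq> topspace orbit_space" "x \<in> \<Gamma>" "orbit f x \<in> L"
  shows "compactin orbit_space L"
  unfolding compactin_def
proof (intro conjI allI impI)
  fix \<U> assume \<U>: "(\<forall>U\<in>\<U>. openin orbit_space U) \<and> L \<subseteq> \<Union>\<U>"
  then obtain U where "U \<in> \<U>" "orbit f x \<in> U"
    using assms(3) by blast
  then have "L \<subseteq> U"
    using open_nbhd_of_\<Gamma>_point \<U> assms by blast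
  then show "\<exists>\<F>. finite \<F> \<and> \<F> \<subseteq> \<U> \<and> L \<subseteq> \<Union>\<F>"
    using \<open>U \<in> \<U>\<close> by (intro exI[of _ "{U}"]) auto
qed (fact assms(1))

lemma delta_map_at_closure_of_orbit:
  assumes h: "h \<in> delta_maps" and s: "s \<in> S1"
    and w: "w \<in> S1" "w \<in> closure (orbit f s)" and hw: "h w \<notin> \<Gamma>"
  shows "h w \<in> orbit f (h s)"
proof -
  have pre: "openin circ {z \<in> S1. h z \<in> W}" if "openin circ W" for W
    using openin_continuous_map_preimage[OF continuous_map_delta_map[OF h] that] by simp
  obtain j where j: "h w \<in> gap j"
    using in_gap delta_map_in_S1[OF h w(1)] hw by blast
  then have "w \<in> {z \<in> S1. h z \<in> gap j}"
    using w(1) by blast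
  then obtain u where u: "u \<in> orbit f s" "u \<in> {z \<in> S1. h z \<in> gap j}"
    by (rule openin_meets_closure[OF pre[OF openin_gap] _ w(2) orbit_subset_S1[OF s]])
  have hu: "h u \<in> orbit f (h s)"
    using delta_map_orbit[OF h s u(1)] .
  have "h w = h u"
  proof (rule ccontr)
    assume "h w \<noteq> h u"
    then have "w \<in> {z \<in> S1. h z \<in> gap j - {h u}}"
      using w(1) j by blast
    then obtain u' where u': "u' \<in> orbit f s" "u' \<in> {z \<in> S1. h z \<in> gap j - {h u}}"
      by (rule openin_meets_closure[OF pre[OF openin_delete[OF openin_gap]] _ w(2) orbit_subset_S1[OF s]])
    have "h u' = h u"
      using orbit_meets_gap_once[OF delta_map_in_S1[OF h s] delta_map_orbit[OF h s u'(1)] hu] u u'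
      by blast
    then show False
      using u' by blast
  qed
  then show ?thesis
    using hu by simp
qed

text \<open>Points of \<open>\<Gamma>\<close> accumulate on \<open>x0\<close> and every orbit accumulates on \<open>\<Gamma>\<close>; by continuity these
  accumulations are carried into gaps, which a single orbit meets at most once.\<close>

lemma delta_map_collapses:
  assumes h: "h \<in> delta_maps" and x0: "x0 \<in> \<Gamma>" "h x0 \<notin> \<Gamma>"
  shows "h ` S1 \<subseteq> orbit f (h x0)"
proof
  fix y assume "y \<in> h ` S1"
  then obtain s where s: "s \<in> S1" "y = h s"
    by blast
  obtain w where w: "w \<in> \<Gamma>" "w \<in> closure (orbit f s)"
    using closure_orbit_meets_\<Gamma>[OF s(1)] .
  have S1: "w \<in> S1" "x0 \<in> S1" "h w \<in> S1" "h x0 \<in> S1" "h s \<in> S1"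
    using w x0 s \<Gamma>_subset delta_map_in_S1[OF h] by blast+
  have "h x0 \<in> orbit f (h w)"
    using delta_map_at_closure_of_orbit[OF h S1(1,2)] \<Gamma>_minimal w x0 by blast
  then have hw: "orbit f (h w) = orbit f (h x0)"
    using orbit_eq_iff S1 by blast
  then have "h w \<notin> \<Gamma>"
    using orbit_of_gap_point[of "h x0"] orbit_refl x0(2) S1 by blast
  then have "h w \<in> orbit f (h s)"
    using delta_map_at_closure_of_orbit[OF h s(1) S1(1) w(2)] by blast
  then have "orbit f (h s) = orbit f (h x0)"
    using hw orbit_eq S1 by metis
  then show "y \<in> orbit f (h x0)"
    using s orbit_refl by metis
qed

lemma lift_through_J0:
  assumes "L \<subseteq> orbit f ` S1" and avoid: "\<And>x. x \<in> \<Gamma> \<Longrightarrow> orbit f x \<notin> L"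
  shows "L \<subseteq> orbit f ` {u \<in> J0. orbit f u \<in> L}"
proof
  fix l assume "l \<in> L"
  then obtain t where t: "t \<in> S1" "l = orbit f t"
    using assms(1) by blast
  then have "t \<in> S1 - \<Gamma>"
    using avoid \<open>l \<in> L\<close> by blast
  then obtain u where "u \<in> J0" "u \<in> orbit f t"
    by (rule orbit_meets_J0)
  then have "orbit f u = l"
    using orbit_eq t by blast
  then show "l \<in> orbit f ` {u \<in> J0. orbit f u \<in> L}"
    using \<open>u \<in> J0\<close> \<open>l \<in> L\<close> by blast
qed

text \<open>The projection is injective on \<open>J0\<close> and maps relatively open subsets of \<open>J0\<close> to open sets.\<close>

lemma compactin_lift_through_J0:
  assumes L: "compactin orbit_space L" and lift: "L \<subseteq> orbit f ` {u \<in> J0. orbit f u \<in> L}"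
  shows "compactin circ {u \<in> J0. orbit f u \<in> L}" (is "compactin circ ?K")
  unfolding compactin_def
proof (intro conjI allI impI)
  show "?K \<subseteq> topspace circ"
    using J0_subset by auto
next
  fix \<U> assume \<U>: "(\<forall>U\<in>\<U>. openin circ U) \<and> ?K \<subseteq> \<Union>\<U>"
  let ?img = "\<lambda>W. orbit f ` (W \<inter> J0)"
  have "openin circ J0"
    using openin_gap[of 0] by (simp only: gap_0)
  then have "\<forall>V\<in>?img ` \<U>. openin orbit_space V"
    using \<U> by (blast intro: openin_orbit_space_image openin_Int)
  moreover have "L \<subseteq> \<Union>(?img ` \<U>)"
  proof
    fix l assume "l \<in> L"
    then obtain u where "u \<in> ?K" "l = orbit f u"
      using lift by blast
    moreover obtain W where "W \<in> \<U>" "u \<in> W"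
      using \<U> \<open>u \<in> ?K\<close> by blast
    ultimately show "l \<in> \<Union>(?img ` \<U>)"
      by blast
  qed
  ultimately have "\<exists>\<F>. finite \<F> \<and> \<F> \<subseteq> ?img ` \<U> \<and> L \<subseteq> \<Union>\<F>"
    by (rule conjunct2[OF L[unfolded compactin_def], rule_format, OF conjI])
  then obtain \<F> where \<F>: "finite \<F>" "\<F> \<subseteq> ?img ` \<U>" "L \<subseteq> \<Union>\<F>"
    by blast
  obtain \<U>' where \<U>': "\<U>' \<subseteq> \<U>" "finite \<U>'" "\<F> = ?img ` \<U>'"
    using finite_subset_image[OF \<F>(1,2)] by (elim exE conjE) (rule that)
  have "?K \<subseteq> \<Union>\<U>'"
  proof
    fix u assume u: "u \<in> ?K"
    then have "orbit f u \<in> \<Union>(?img ` \<U>')"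
      using \<F>(3) \<U>'(3) by blast
    then obtain W u' where "W \<in> \<U>'" "u' \<in> W \<inter> J0" "orbit f u = orbit f u'"
      by blast
    moreover have "u = u'"
      using inj_onD[OF inj_on_orbit_J0] u calculation by blast
    ultimately show "u \<in> \<Union>\<U>'"
      by blast
  qed
  then show "\<exists>\<F>. finite \<F> \<and> \<F> \<subseteq> \<U> \<and> ?K \<subseteq> \<Union>\<F>"
    using \<U>' by blast
qed

lemma delta_map_compact_open_nbhd:
  assumes h0: "h0 \<in> delta_maps" and L: "compactin orbit_space L" and U: "openin orbit_space U"
    and sub: "psi circ orbit_space (orbit f) h0 ` L \<subseteq> U"
  obtains K where "compactin circ K" "L \<subseteq> orbit f ` K"
    "h0 ` K \<subseteq> {z \<in> S1. orbit f z \<in> U}"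
proof (cases "\<exists>x\<in>\<Gamma>. orbit f x \<in> L")
  case False
  define K where "K = {u \<in> J0. orbit f u \<in> L}"
  have "L \<subseteq> orbit f ` S1"
    using compactin_subset_topspace[OF L] topspace_orbit_space by simp
  then have K: "L \<subseteq> orbit f ` K" "compactin circ K"
    using lift_through_J0 compactin_lift_through_J0[OF L] False unfolding K_def by blast+
  have "h0 k \<in> {z \<in> S1. orbit f z \<in> U}" if "k \<in> K" for k
  proof -
    have "k \<in> S1"
      using that J0_subset unfolding K_def by blast
    then show ?thesis
      using that sub psi_delta_map[OF h0] delta_map_in_S1[OF h0] unfolding K_def by auto
  qed
  then show thesis
    using that K by blast
next
  case True
  then obtain x where x: "x \<in> \<Gamma>" "orbit f x \<in> L"
    by blast
  have S1: "x \<in> S1" "h0 x \<in> S1"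
    using x \<Gamma>_subset delta_map_in_S1[OF h0] by blast+
  have hx: "orbit f (h0 x) \<in> U"
    using psi_delta_map[OF h0 S1(1)] sub x(2) by blast
  have "h0 ` S1 \<subseteq> {z \<in> S1. orbit f z \<in> U}"
  proof (cases "h0 x \<in> \<Gamma>")
    case True
    then have "orbit f ` S1 \<subseteq> U"
      using open_nbhd_of_\<Gamma>_point[OF U _ hx] topspace_orbit_space by simp
    then show ?thesis
      using delta_map_in_S1[OF h0] by blast
  next
    case False
    have "orbit f z = orbit f (h0 x)" if "z \<in> orbit f (h0 x)" for z
      using orbit_eq[OF S1(2) that] .
    then show ?thesis
      using delta_map_collapses[OF h0 x(1) False] hx delta_map_in_S1[OF h0] by auto
  qed
  moreover have "L \<subseteq> orbit f ` S1"
    using compactin_subset_topspace[OF L] topspace_orbit_space by simp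
  moreover have "compactin circ S1"
    by (simp add: compactin_subtopology)
  ultimately show thesis
    using that by blast
qed

theorem has_CONT_orbit_projection: "has_CONT circ (orbits f) orbit_space (orbit f)"
  unfolding has_CONT_def
proof (rule continuous_map_compact_openI)
  show "psi circ orbit_space (orbit f) ` delta_maps \<subseteq> End_top orbit_space"
    by (rule image_subsetI) (rule psi_delta_map_in_End_top)
next
  fix h0 L U
  assume h0: "h0 \<in> delta_maps" and L: "compactin orbit_space L" and U: "openin orbit_space U"
    and "psi circ orbit_space (orbit f) h0 ` L \<subseteq> U"
  then obtain K where K: "compactin circ K" "L \<subseteq> orbit f ` K" "h0 ` K \<subseteq> {z \<in> S1. orbit f z \<in> U}"
    by (rule delta_map_compact_open_nbhd)
  have V: "openin circ {z \<in> S1. orbit f z \<in> U}"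
    using U openin_orbit_space by blast
  have "K \<subseteq> S1"
    using compactin_subset_topspace[OF K(1)] by simp
  then have "\<forall>h\<in>delta_maps. h ` K \<subseteq> {z \<in> S1. orbit f z \<in> U} \<longrightarrow>
      psi circ orbit_space (orbit f) h ` L \<subseteq> U"
    using psi_image_subset[OF _ \<open>K \<subseteq> S1\<close> K(2)] by blast
  then show "\<exists>K V. compactin circ K \<and> openin circ V \<and> h0 ` K \<subseteq> V \<and>
      (\<forall>h\<in>delta_maps. h ` K \<subseteq> V \<longrightarrow> psi circ orbit_space (orbit f) h ` L \<subseteq> U)"
    using K(1,3) V by blast
qed

lemma fpow_lift_iff_irrational:
  assumes "K \<subseteq> S1" and pK: "orbit f ` K = orbit f ` (circexp ` ({a<..<b} - \<rat>) \<union> {x0})"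
    and "x0 \<in> \<Gamma>" and s: "s \<in> {a<..<b}"
  shows "(\<exists>m. fpow f m (circexp s) \<in> K) \<longleftrightarrow> s \<notin> \<rat>"
proof
  assume "\<exists>m. fpow f m (circexp s) \<in> K"
  then obtain m where "fpow f m (circexp s) \<in> K"
    by blast
  moreover have "orbit f (fpow f m (circexp s)) = orbit f (circexp s)"
    by (rule orbit_eq[OF circexp_in_S1]) (auto simp: mem_orbit_iff)
  ultimately have "orbit f (circexp s) \<in> orbit f ` (circexp ` ({a<..<b} - \<rat>) \<union> {x0})"
    unfolding pK[symmetric] by (metis imageI)
  then obtain y where y: "y \<in> circexp ` ({a<..<b} - \<rat>) \<union> {x0}" "orbit f (circexp s) = orbit f y"
    by blast
  have sJ0: "circexp s \<in> J0"
    using s by blast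
  show "s \<notin> \<rat>"
  proof (cases "y = x0")
    case True
    then have "circexp s \<in> orbit f x0"
      using y(2) orbit_refl by metis
    then have "circexp s \<in> \<Gamma>"
      using orbit_of_\<Gamma>_point \<open>x0 \<in> \<Gamma>\<close> by blast
    then show ?thesis
      using sJ0 J0_subset by blast
  next
    case False
    then obtain s' where s': "s' \<in> {a<..<b} - \<rat>" "y = circexp s'"
      using y(1) by blast
    then have "circexp s = circexp s'"
      using inj_onD[OF inj_on_orbit_J0 y(2) sJ0] by blast
    then have "s = s'"
      using inj_onD[OF inj_on_circexp[OF arc(2)]] s s' by blast
    then show ?thesis
      using s' by blast
  qed
next
  assume "s \<notin> \<rat>"
  then have "circexp s \<in> circexp ` ({a<..<b} - \<rat>) \<union> {x0}"
    using s by blast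
  then have "orbit f (circexp s) \<in> orbit f ` K"
    unfolding pK by (rule imageI)
  then obtain k where k: "k \<in> K" "orbit f (circexp s) = orbit f k"
    by (metis imageE)
  then have "k \<in> orbit f (circexp s)"
    using orbit_eq_iff[OF circexp_in_S1] \<open>K \<subseteq> S1\<close> by blast
  then show "\<exists>m. fpow f m (circexp s) \<in> K"
    using k(1) unfolding mem_orbit_iff by blast
qed

theorem not_has_COMP_orbit_projection: "\<not> has_COMP circ orbit_space (orbit f)"
proof
  assume "has_COMP circ orbit_space (orbit f)"
  obtain x0 where x0: "x0 \<in> \<Gamma>"
    using \<Gamma>_nonempty by blast
  define L where "L = orbit f ` (circexp ` ({a<..<b} - \<rat>) \<union> {x0})"
  have "circexp ` ({a<..<b} - \<rat>) \<union> {x0} \<subseteq> S1"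
    using x0 \<Gamma>_subset circexp_in_S1 by blast
  then have "L \<subseteq> topspace orbit_space"
    unfolding L_def topspace_orbit_space by (rule image_mono)
  moreover have "orbit f x0 \<in> L"
    unfolding L_def by blast
  ultimately have "compactin orbit_space L"
    by (rule compactin_orbit_space_through_\<Gamma>[OF _ x0])
  then obtain K where K: "compactin circ K" "orbit f ` K = L"
    using \<open>has_COMP circ orbit_space (orbit f)\<close> unfolding has_COMP_def by blast
  then have "compact K" "K \<subseteq> S1"
    by (simp_all add: compactin_subtopology)
  define c d where "c = a + (b - a) / 3" and "d = a + 2 * (b - a) / 3"
  have "c < d" "{c..d} \<subseteq> {a<..<b}"
    using arc(1) by (auto simp: c_def d_def field_simps)
  define C where "C m = {c..d} \<inter> (\<lambda>s. fpow f m (circexp s)) -` K" for m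
  have "closed (C m)" for m
    unfolding C_def using closed_preimage_fpow_circexp compact_imp_closed[OF \<open>compact K\<close>] by blast
  moreover have "(\<exists>m. s \<in> C m) \<longleftrightarrow> s \<in> {c..d} - \<rat>" for s
  proof (cases "s \<in> {c..d}")
    case True
    then have "s \<in> {a<..<b}"
      using \<open>{c..d} \<subseteq> {a<..<b}\<close> by blast
    then have "(\<exists>m. fpow f m (circexp s) \<in> K) \<longleftrightarrow> s \<notin> \<rat>"
      by (rule fpow_lift_iff_irrational[OF \<open>K \<subseteq> S1\<close> K(2)[unfolded L_def] x0])
    then show ?thesis
      using True by (simp add: C_def)
  next
    case False
    then show ?thesis
      by (auto simp: C_def)
  qed
  then have "\<Union>(range C) = {c..d} - \<rat>"
    by blast
  moreover have "countable (range C)"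
    by simp
  ultimately show False
    using irrationals_not_countable_Union_closed[OF \<open>c < d\<close>] by blast
qed

end

theorem mainTheorem14:
  fixes f :: "complex \<Rightarrow> complex"
  assumes "denjoy f"
  shows "has_CONT circ (orbits f) (quotient_top circ (orbit f)) (orbit f) \<and>
         \<not> has_COMP circ (quotient_top circ (orbit f)) (orbit f)"
proof -
  obtain \<Gamma> J0 where hom: "homeomorphic_map circ circ f" and "\<Gamma> \<subseteq> S1" "cantor_set \<Gamma>"
    "\<forall>x\<in>\<Gamma>. \<Gamma> \<subseteq> closure (orbit f x)" "open_arc J0" and gaps: "S1 - \<Gamma> = (\<Union>m. fpow f m ` J0)"
    "disjoint_family (\<lambda>m::int. fpow f m ` J0)"
    using assms unfolding denjoy_def orient_pres_irrational_rot_def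
    by (elim conjE exE) (rule that, assumption+)
  obtain a b where "a < b" "b \<le> a + 1" "J0 = circexp ` {a<..<b}"
    using \<open>open_arc J0\<close> unfolding open_arc_def by blast
  interpret denjoy_system f \<Gamma> a b
  proof
    show "\<Gamma> \<noteq> {}"
      using \<open>cantor_set \<Gamma>\<close> by (simp add: cantor_set_def)
  qed (use hom \<open>\<Gamma> \<subseteq> S1\<close> \<open>\<forall>x\<in>\<Gamma>. \<Gamma> \<subseteq> closure (orbit f x)\<close> \<open>a < b\<close> \<open>b \<le> a + 1\<close> gaps
      \<open>J0 = circexp ` {a<..<b}\<close> in simp_all)
  show ?thesis
    using has_CONT_orbit_projection not_has_COMP_orbit_projection by blast
qed

end
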